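(* Let $T$ be a tree. The faces of $\Delta_T$ having distributable capacity form a subcomplex of $\Delta_T$. Moreover, if $T'$ is a tree with vertex capacities having distributable capacity and $C$ is the vertex obtained by merging two neighboring vertices $C_1,C_2$ of $T'$ (with capacity $\mathrm{cap}(C_1)+\mathrm{cap}(C_2)$), then $\mathrm{cap}(C)\ge\deg(C)$.
   Context: For a tree $T$ on vertex set $[n]$, the Coxeter-like complex $\Delta_T$ has as faces: a set $E^C(F)$ of edges of $T$ to delete together with an assignment to each component $C$ of the resulting forest of exactly $|C|$ labels from $[n]$, each label used exactly once; $\sigma\subseteq\tau$ iff $\sigma$ is obtained from $\tau$ by merging neighboring components. For a tree with vertex capacities and an edge subset $E$, the associated tree has as vertices the components of the forest obtained by deleting $E$, as edges the edges of $E$, and capacity of a component equal to the sum of its vertex capacities. A tree with capacities has distributable capacity if $\mathrm{cap}(v)\ge\deg(v)-1$ for every vertex $v$. A face $F$ of $\Delta_T$ has distributable capacity if the tree associated to $(T,E^C(F))$, with all vertices of $T$ having capacity $1$, has distributable capacity. *)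

theory Defs
  imports Main
begin

definition is_tree :: "'a set \<Rightarrow> 'a set set \<Rightarrow> bool" where
  "is_tree V E \<longleftrightarrow> finite V \<and> V \<noteq> {}
     \<and> (\<forall>e\<in>E. \<exists>u v. e = {u, v} \<and> u \<in> V \<and> v \<in> V \<and> u \<noteq> v)
     \<and> (\<forall>u\<in>V. \<forall>v\<in>V. (\<lambda>x y. {x, y} \<in> E)\<^sup>*\<^sup>* u v)
     \<and> card E + 1 = card V"

definition deg :: "'a set set \<Rightarrow> 'a \<Rightarrow> nat" where
  "deg E v = card {e \<in> E. v \<in> e}"

definition distributable :: "'a set \<Rightarrow> 'a set set \<Rightarrow> ('a \<Rightarrow> nat) \<Rightarrow> bool" where
  "distributable V E cap \<longleftrightarrow> (\<forall>v\<in>V. int (cap v) \<ge> int (deg E v) - 1)"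

definition comp :: "'a set \<Rightarrow> 'a set set \<Rightarrow> 'a set set \<Rightarrow> 'a \<Rightarrow> 'a set" where
  "comp V E F v = {w \<in> V. (\<lambda>x y. {x, y} \<in> E - F)\<^sup>*\<^sup>* v w}"

definition components :: "'a set \<Rightarrow> 'a set set \<Rightarrow> 'a set set \<Rightarrow> 'a set set" where
  "components V E F = comp V E F ` V"

definition assoc_edges :: "'a set \<Rightarrow> 'a set set \<Rightarrow> 'a set set \<Rightarrow> 'a set set set" where
  "assoc_edges V E F = {{comp V E F u, comp V E F v} | u v. {u, v} \<in> F}"

definition assoc_cap :: "('a \<Rightarrow> nat) \<Rightarrow> 'a set \<Rightarrow> nat" where
  "assoc_cap cap C = sum cap C"

text \<open>Faces of the Coxeter-like complex Delta_T for a tree T on [n] = {1..n} with edges E: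
  a pair (F, lab) of a set F of deleted edges and a labelling of the components.\<close>
definition is_face :: "nat \<Rightarrow> nat set set \<Rightarrow> nat set set \<times> (nat set \<Rightarrow> nat set) \<Rightarrow> bool" where
  "is_face n E \<phi> \<longleftrightarrow> (case \<phi> of (F, lab) \<Rightarrow>
     F \<subseteq> E
     \<and> (\<forall>C\<in>components {1..n} E F. lab C \<subseteq> {1..n} \<and> card (lab C) = card C)
     \<and> (\<forall>C\<in>components {1..n} E F. \<forall>D\<in>components {1..n} E F. C \<noteq> D \<longrightarrow> lab C \<inter> lab D = {})
     \<and> \<Union> (lab ` components {1..n} E F) = {1..n})"

text \<open>sigma \<subseteq> tau: sigma arises from tau by merging neighbouring components.\<close>
definition face_le :: "nat \<Rightarrow> nat set set \<Rightarrow> nat set set \<times> (nat set \<Rightarrow> nat set)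
    \<Rightarrow> nat set set \<times> (nat set \<Rightarrow> nat set) \<Rightarrow> bool" where
  "face_le n E \<sigma> \<tau> \<longleftrightarrow> (case \<sigma> of (F', lab') \<Rightarrow> case \<tau> of (F, lab) \<Rightarrow>
     F' \<subseteq> F \<and> (\<forall>C\<in>components {1..n} E F'.
        lab' C = \<Union> {lab D | D. D \<in> components {1..n} E F \<and> D \<subseteq> C}))"

definition face_distributable :: "nat \<Rightarrow> nat set set \<Rightarrow> nat set set \<times> (nat set \<Rightarrow> nat set) \<Rightarrow> bool" where
  "face_distributable n E \<phi> \<longleftrightarrow>
     distributable (components {1..n} E (fst \<phi>)) (assoc_edges {1..n} E (fst \<phi>)) (assoc_cap (\<lambda>_. 1))"

end

theory Submission imports Defs begin

text \<open>Putting back one deleted edge \<open>{a, b}\<close> contracts the edge \<open>{A, B}\<close> of the associated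
  tree between the components of \<open>a\<close> and \<open>b\<close>. The merged vertex has capacity
  \<open>|A| + |B| \<ge> deg A + deg B - 2\<close>, while its degree is at most \<open>deg A + deg B - 1\<close>, since the
  contracted edge is counted at both ends; so distributability survives, and going from a face to
  a smaller one restores edges one at a time. The same count bounds the degree of a merged pair
  \<open>C\<^sub>1, C\<^sub>2\<close> by \<open>(deg C\<^sub>1 - 1) + (deg C\<^sub>2 - 1) \<le> cap C\<^sub>1 + cap C\<^sub>2\<close>. Neither argument uses
  acyclicity.\<close>

lemma edge_rtranclp_sym:
  assumes "(\<lambda>x y. {x, y} \<in> S)\<^sup>*\<^sup>* x y"
  shows "(\<lambda>x y. {x, y} \<in> S)\<^sup>*\<^sup>* y x"
  using assms
proof (induction rule: rtranclp_induct)
  case (step y z)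
  then have "{z, y} \<in> S" by (simp add: insert_commute)
  with step.IH show ?case by (meson converse_rtranclp_into_rtranclp)
qed simp

lemma edge_rtranclp_insert:
  fixes S :: "'a set set"
  defines "R \<equiv> \<lambda>x y. {x, y} \<in> S"
  shows "(\<lambda>x y. {x, y} \<in> insert {a, b} S)\<^sup>*\<^sup>* x y \<longleftrightarrow>
     R\<^sup>*\<^sup>* x y \<or> (R\<^sup>*\<^sup>* x a \<and> R\<^sup>*\<^sup>* b y) \<or> (R\<^sup>*\<^sup>* x b \<and> R\<^sup>*\<^sup>* a y)"
    (is "?R'\<^sup>*\<^sup>* x y \<longleftrightarrow> _")
proof
  assume "?R'\<^sup>*\<^sup>* x y"
  then show "R\<^sup>*\<^sup>* x y \<or> (R\<^sup>*\<^sup>* x a \<and> R\<^sup>*\<^sup>* b y) \<or> (R\<^sup>*\<^sup>* x b \<and> R\<^sup>*\<^sup>* a y)"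
  proof (induction rule: rtranclp_induct)
    case (step y z)
    then have "R y z \<or> (y = a \<and> z = b) \<or> (y = b \<and> z = a)"
      unfolding R_def by (auto simp: doubleton_eq_iff)
    then show ?case
    proof (elim disjE conjE)
      assume "R y z"
      with step.IH show ?case by (meson rtranclp.rtrancl_into_rtrancl)
    qed (use step.IH in auto)
  qed simp
next
  have R_le: "R\<^sup>*\<^sup>* u v \<Longrightarrow> ?R'\<^sup>*\<^sup>* u v" for u v
    unfolding R_def by (erule rtranclp_mono[THEN predicate2D, rotated]) auto
  have "?R' a b" "?R' b a" by (auto simp: insert_commute)
  then have ab: "?R'\<^sup>*\<^sup>* a b" "?R'\<^sup>*\<^sup>* b a" by auto
  assume "R\<^sup>*\<^sup>* x y \<or> (R\<^sup>*\<^sup>* x a \<and> R\<^sup>*\<^sup>* b y) \<or> (R\<^sup>*\<^sup>* x b \<and> R\<^sup>*\<^sup>* a y)"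
  then show "?R'\<^sup>*\<^sup>* x y"
    using R_le ab by (blast intro: rtranclp_trans)
qed

lemma card_edges_containing_le_fibre:
  assumes "finite X" and "Y \<subseteq> (\<lambda>x. g ` x) ` X"
  shows "card {y \<in> Y. w \<in> y} \<le> card {x \<in> X. \<exists>v\<in>x. g v = w}"
proof -
  have "{y \<in> Y. w \<in> y} \<subseteq> (\<lambda>x. g ` x) ` {x \<in> X. \<exists>v\<in>x. g v = w}"
  proof
    fix y assume "y \<in> {y \<in> Y. w \<in> y}"
    then obtain x where "x \<in> X" "y = g ` x" "w \<in> g ` x" using assms(2) by blast
    then show "y \<in> (\<lambda>x. g ` x) ` {x \<in> X. \<exists>v\<in>x. g v = w}" by auto
  qed
  then have "card {y \<in> Y. w \<in> y} \<le> card ((\<lambda>x. g ` x) ` {x \<in> X. \<exists>v\<in>x. g v = w})"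
    using assms(1) by (intro card_mono) auto
  also have "\<dots> \<le> card {x \<in> X. \<exists>v\<in>x. g v = w}"
    by (rule card_image_le) (use assms(1) in auto)
  finally show ?thesis .
qed

lemma card_edges_meeting_edge:
  assumes "finite X" and "{a, b} \<in> X"
  shows "card {x \<in> X. a \<in> x \<or> b \<in> x} + 1 \<le> deg X a + deg X b"
proof -
  let ?A = "{x \<in> X. a \<in> x}" and ?B = "{x \<in> X. b \<in> x}"
  have fin: "finite ?A" "finite ?B" using assms(1) by auto
  have "?A \<inter> ?B \<noteq> {}" using assms(2) by blast
  then have "1 \<le> card (?A \<inter> ?B)"
    using fin by (simp add: Suc_leI card_gt_0_iff)
  moreover have "{x \<in> X. a \<in> x \<or> b \<in> x} = ?A \<union> ?B" by blast
  ultimately show ?thesis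
    using card_Un_Int[OF fin] unfolding deg_def by simp
qed

definition merge :: "'a set \<Rightarrow> 'a set \<Rightarrow> 'a set \<Rightarrow> 'a set" where
  "merge A B D = (if D = A \<or> D = B then A \<union> B else D)"

lemma cap_one_eq_card: "assoc_cap (\<lambda>_. 1) C = card C"
  by (simp add: assoc_cap_def)

locale finite_simple_graph =
  fixes V :: "'a set" and E :: "'a set set"
  assumes finite_vertices: "finite V"
    and edge_pair: "\<forall>e\<in>E. \<exists>u v. e = {u, v} \<and> u \<in> V \<and> v \<in> V \<and> u \<noteq> v"
begin

lemma edgeE:
  assumes "e \<in> E"
  obtains u v where "e = {u, v}" "u \<in> V" "v \<in> V" "u \<noteq> v"
proof -
  have "\<exists>u v. e = {u, v} \<and> u \<in> V \<and> v \<in> V \<and> u \<noteq> v" using edge_pair assms by (rule bspec)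
  then show thesis by (elim exE conjE) (rule that)
qed

lemma edge_subset_vertices: "e \<in> E \<Longrightarrow> e \<subseteq> V"
  by (erule edgeE) simp

lemma finite_edges: "finite E"
  using edge_subset_vertices finite_vertices by (meson PowI finite_Pow_iff finite_subset subsetI)

lemma mem_comp_iff: "w \<in> comp V E F v \<longleftrightarrow> w \<in> V \<and> (\<lambda>x y. {x, y} \<in> E - F)\<^sup>*\<^sup>* v w"
  unfolding comp_def by (rule mem_Collect_eq)

lemma comp_self: "v \<in> V \<Longrightarrow> v \<in> comp V E F v"
  by (simp add: comp_def)

lemma comp_subset_vertices: "comp V E F v \<subseteq> V"
  by (auto simp: comp_def)

lemma finite_comp: "finite (comp V E F v)"
  using comp_subset_vertices finite_vertices by (rule finite_subset)

lemma comp_in_components: "v \<in> V \<Longrightarrow> comp V E F v \<in> components V E F"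
  by (simp add: components_def)

lemma comp_eq_iff:
  assumes "u \<in> V" and "v \<in> V"
  shows "comp V E F u = comp V E F v \<longleftrightarrow> (\<lambda>x y. {x, y} \<in> E - F)\<^sup>*\<^sup>* u v"
proof
  assume "comp V E F u = comp V E F v"
  then have "u \<in> comp V E F v" using comp_self[OF assms(1), of F] by simp
  then have "(\<lambda>x y. {x, y} \<in> E - F)\<^sup>*\<^sup>* v u"
    unfolding mem_comp_iff by (rule conjunct2)
  then show "(\<lambda>x y. {x, y} \<in> E - F)\<^sup>*\<^sup>* u v" by (rule edge_rtranclp_sym)
next
  assume "(\<lambda>x y. {x, y} \<in> E - F)\<^sup>*\<^sup>* u v"
  moreover from this have "(\<lambda>x y. {x, y} \<in> E - F)\<^sup>*\<^sup>* v u" by (rule edge_rtranclp_sym)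
  ultimately show "comp V E F u = comp V E F v"
    unfolding set_eq_iff mem_comp_iff by (blast intro: rtranclp_trans)
qed

lemma comp_eq_if_meet:
  assumes "u \<in> V" "v \<in> V" and "comp V E F u \<inter> comp V E F v \<noteq> {}"
  shows "comp V E F u = comp V E F v"
proof -
  obtain w where "w \<in> comp V E F u" "w \<in> comp V E F v" using assms(3) by blast
  then have "(\<lambda>x y. {x, y} \<in> E - F)\<^sup>*\<^sup>* u w" "(\<lambda>x y. {x, y} \<in> E - F)\<^sup>*\<^sup>* v w"
    unfolding mem_comp_iff by blast+
  then have "(\<lambda>x y. {x, y} \<in> E - F)\<^sup>*\<^sup>* u v" by (blast intro: rtranclp_trans edge_rtranclp_sym)
  then show ?thesis using comp_eq_iff assms(1,2) by blast
qed

lemma assoc_edges_eq_image: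
  assumes "F \<subseteq> E"
  shows "assoc_edges V E F = (\<lambda>e. comp V E F ` e) ` F"
proof (rule set_eqI)
  fix y
  have "y \<in> assoc_edges V E F" if "e \<in> F" "y = comp V E F ` e" for e
  proof -
    obtain u v where "e = {u, v}" using \<open>e \<in> F\<close> assms by (blast elim: edgeE)
    then show ?thesis using that unfolding assoc_edges_def by blast
  qed
  moreover have "y \<in> (\<lambda>e. comp V E F ` e) ` F" if y: "y \<in> assoc_edges V E F"
  proof -
    obtain u v where "y = {comp V E F u, comp V E F v}" "{u, v} \<in> F"
      using y unfolding assoc_edges_def by blast
    then have "y = comp V E F ` {u, v}" "{u, v} \<in> F" by simp_all
    then show ?thesis by (rule image_eqI)
  qed
  ultimately show "y \<in> assoc_edges V E F \<longleftrightarrow> y \<in> (\<lambda>e. comp V E F ` e) ` F" by blast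
qed

lemma assoc_edge_subset_components:
  assumes "F \<subseteq> E" and "x \<in> assoc_edges V E F"
  shows "x \<subseteq> components V E F"
  using assms edge_subset_vertices comp_in_components
  unfolding assoc_edges_eq_image[OF assms(1)] by blast

lemma finite_assoc_edges: "F \<subseteq> E \<Longrightarrow> finite (assoc_edges V E F)"
  using finite_edges by (simp add: assoc_edges_eq_image finite_subset)

lemma comp_Diff_edge:
  assumes "F \<subseteq> E" and "{a, b} \<in> F" and "v \<in> V"
  defines "c \<equiv> comp V E F"
  shows "comp V E (F - {{a, b}}) v = merge (c a) (c b) (c v)"
proof -
  have a: "a \<in> V" and b: "b \<in> V" using assms(1,2) edge_subset_vertices by auto
  let ?R = "\<lambda>x y. {x, y} \<in> E - F" and ?c' = "comp V E (F - {{a, b}})"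
  have "E - (F - {{a, b}}) = insert {a, b} (E - F)" using assms(1,2) by blast
  then have reach: "(\<lambda>x y. {x, y} \<in> E - (F - {{a, b}}))\<^sup>*\<^sup>* x y \<longleftrightarrow>
      ?R\<^sup>*\<^sup>* x y \<or> (?R\<^sup>*\<^sup>* x a \<and> ?R\<^sup>*\<^sup>* b y) \<or> (?R\<^sup>*\<^sup>* x b \<and> ?R\<^sup>*\<^sup>* a y)" for x y
    by (simp only: edge_rtranclp_insert)
  have ca: "c v = c a \<longleftrightarrow> ?R\<^sup>*\<^sup>* v a" and cb: "c v = c b \<longleftrightarrow> ?R\<^sup>*\<^sup>* v b"
    unfolding c_def using comp_eq_iff a b assms(3) by blast+
  show ?thesis
  proof (cases "?R\<^sup>*\<^sup>* v a \<or> ?R\<^sup>*\<^sup>* v b")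
    case True
    have "?c' a = c a \<union> c b"
      unfolding set_eq_iff Un_iff c_def mem_comp_iff reach by (auto intro: edge_rtranclp_sym)
    moreover have "?c' v = ?c' a"
      using comp_eq_iff[OF assms(3) a, of "F - {{a, b}}"] True unfolding reach by auto
    ultimately show ?thesis using True unfolding merge_def ca cb by simp
  next
    case False
    then have "?c' v = c v"
      unfolding set_eq_iff c_def mem_comp_iff reach by blast
    then show ?thesis using False unfolding merge_def ca cb by simp
  qed
qed

lemma merge_comp_eqD:
  fixes F :: "'a set set"
  assumes "a \<in> V" "b \<in> V" "u \<in> V" "v \<in> V"
  defines "c \<equiv> comp V E F"
  assumes "merge (c a) (c b) (c u) = merge (c a) (c b) (c v)"
  shows "c u = c v \<or> {c u, c v} \<subseteq> {c a, c b}"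
proof -
  have absorb: "c w = c a" if "w \<in> V" "c a \<union> c b = c w" for w
    using comp_eq_if_meet[OF assms(1) that(1)] comp_self[OF assms(1)] that(2)
    unfolding c_def by blast
  show ?thesis
    using assms(6) absorb[OF assms(3)] absorb[OF assms(4)] unfolding merge_def
    by (auto split: if_splits)
qed

lemma components_Diff_edge:
  assumes "F \<subseteq> E" and "{a, b} \<in> F"
  defines "c \<equiv> comp V E F"
  shows "components V E (F - {{a, b}}) = merge (c a) (c b) ` components V E F"
  unfolding components_def c_def using comp_Diff_edge[OF assms(1,2)] by (auto simp: image_comp)

lemma assoc_edges_Diff_edge_subset:
  assumes "F \<subseteq> E" and "{a, b} \<in> F"
  defines "c \<equiv> comp V E F"
  shows "assoc_edges V E (F - {{a, b}}) \<subseteq> (\<lambda>x. merge (c a) (c b) ` x) ` assoc_edges V E F"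
proof -
  have "assoc_edges V E (F - {{a, b}}) = (\<lambda>x. comp V E (F - {{a, b}}) ` x) ` (F - {{a, b}})"
    using assms(1) by (intro assoc_edges_eq_image) blast
  also have "\<dots> = (\<lambda>x. merge (c a) (c b) ` c ` x) ` (F - {{a, b}})"
  proof (rule image_cong[OF refl])
    fix x assume "x \<in> F - {{a, b}}"
    then have "x \<subseteq> V" using assms(1) edge_subset_vertices by blast
    then show "comp V E (F - {{a, b}}) ` x = merge (c a) (c b) ` c ` x"
      unfolding image_image c_def using comp_Diff_edge[OF assms(1,2)] by (auto intro: image_cong)
  qed
  also have "\<dots> \<subseteq> (\<lambda>x. merge (c a) (c b) ` x) ` assoc_edges V E F"
    unfolding assoc_edges_eq_image[OF assms(1)] c_def by blast
  finally show ?thesis .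
qed

lemma deg_merge_le:
  assumes F: "F \<subseteq> E" and ab: "{a, b} \<in> F" and D: "D \<in> components V E F"
  defines "A \<equiv> comp V E F a" and "B \<equiv> comp V E F b" and "X \<equiv> assoc_edges V E F"
  shows "deg (assoc_edges V E (F - {{a, b}})) (merge A B D)
    \<le> card {x \<in> X. D \<in> x \<or> (D \<in> {A, B} \<and> (A \<in> x \<or> B \<in> x))}"
proof -
  have a: "a \<in> V" and b: "b \<in> V" using F ab edge_subset_vertices by auto
  have fin: "finite X" unfolding X_def using F by (rule finite_assoc_edges)
  have fibre: "{x \<in> X. \<exists>D0\<in>x. merge A B D0 = merge A B D}
      \<subseteq> {x \<in> X. D \<in> x \<or> (D \<in> {A, B} \<and> (A \<in> x \<or> B \<in> x))}"
  proof
    fix x assume "x \<in> {x \<in> X. \<exists>D0\<in>x. merge A B D0 = merge A B D}"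
    then obtain D0 where x: "x \<in> X" "D0 \<in> x" "merge A B D0 = merge A B D" by blast
    then have "D0 \<in> components V E F"
      using assoc_edge_subset_components[OF F] unfolding X_def by blast
    then have "D0 = D \<or> {D0, D} \<subseteq> {A, B}"
      using D x(3) merge_comp_eqD[OF a b] unfolding components_def A_def B_def by blast
    then show "x \<in> {x \<in> X. D \<in> x \<or> (D \<in> {A, B} \<and> (A \<in> x \<or> B \<in> x))}"
      using x(1,2) by auto
  qed
  moreover have "deg (assoc_edges V E (F - {{a, b}})) (merge A B D)
      \<le> card {x \<in> X. \<exists>D0\<in>x. merge A B D0 = merge A B D}"
    unfolding deg_def using fin assoc_edges_Diff_edge_subset[OF F ab]
    unfolding A_def B_def X_def by (rule card_edges_containing_le_fibre)
  ultimately show ?thesis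
    using card_mono[OF _ fibre] fin by simp
qed

lemma distributable_Diff_edge:
  assumes F: "F \<subseteq> E" and e: "e \<in> F"
    and dist: "distributable (components V E F) (assoc_edges V E F) (assoc_cap (\<lambda>_. 1))"
  shows "distributable (components V E (F - {e})) (assoc_edges V E (F - {e})) (assoc_cap (\<lambda>_. 1))"
proof -
  obtain a b where e_ab: "e = {a, b}" and a: "a \<in> V" and b: "b \<in> V"
    using F e by (blast elim: edgeE)
  have ab: "{a, b} \<in> F" using e e_ab by simp
  let ?X = "assoc_edges V E F" and ?X' = "assoc_edges V E (F - {{a, b}})"
  define A B where "A = comp V E F a" and "B = comp V E F b"
  have cap: "int (deg ?X D) - 1 \<le> int (card D)" if "D \<in> components V E F" for D
    using dist that unfolding distributable_def cap_one_eq_card by blast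
  show ?thesis
    unfolding distributable_def cap_one_eq_card e_ab components_Diff_edge[OF F ab]
      A_def[symmetric] B_def[symmetric] ball_simps
  proof
    fix D assume D: "D \<in> components V E F"
    have deg_le: "deg ?X' (merge A B D)
        \<le> card {x \<in> ?X. D \<in> x \<or> (D \<in> {A, B} \<and> (A \<in> x \<or> B \<in> x))}"
      unfolding A_def B_def using F ab D by (rule deg_merge_le)
    show "int (deg ?X' (merge A B D)) - 1 \<le> int (card (merge A B D))"
    proof (cases "A = B \<or> D \<notin> {A, B}")
      case True
      then have "merge A B D = D" and "{x \<in> ?X. D \<in> x \<or> (D \<in> {A, B} \<and> (A \<in> x \<or> B \<in> x))}
          = {x \<in> ?X. D \<in> x}"
        by (auto simp: merge_def)
      then show ?thesis using deg_le cap[OF D] unfolding deg_def by simp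
    next
      case False
      then have "A \<noteq> B" and merged: "merge A B D = A \<union> B"
        and "{x \<in> ?X. D \<in> x \<or> (D \<in> {A, B} \<and> (A \<in> x \<or> B \<in> x))}
          = {x \<in> ?X. A \<in> x \<or> B \<in> x}"
        by (auto simp: merge_def)
      moreover have "{A, B} = comp V E F ` {a, b}" unfolding A_def B_def by simp
      then have "{A, B} \<in> ?X"
        unfolding assoc_edges_eq_image[OF F] using ab by (rule image_eqI)
      ultimately have "deg ?X' (A \<union> B) + 1 \<le> deg ?X A + deg ?X B"
        using deg_le card_edges_meeting_edge[OF finite_assoc_edges[OF F]] by fastforce
      moreover have "card (A \<union> B) = card A + card B"
        using comp_eq_if_meet[OF a b] \<open>A \<noteq> B\<close> finite_comp
        unfolding A_def B_def by (intro card_Un_disjoint) auto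
      moreover have "A \<in> components V E F" "B \<in> components V E F"
        unfolding A_def B_def using a b by (simp_all add: comp_in_components)
      then have "int (deg ?X A) - 1 \<le> int (card A)" "int (deg ?X B) - 1 \<le> int (card B)"
        using cap by blast+
      ultimately show ?thesis unfolding merged by linarith
    qed
  qed
qed

lemma distributable_antimono:
  assumes "F' \<subseteq> F" and "F \<subseteq> E"
    and "distributable (components V E F) (assoc_edges V E F) (assoc_cap (\<lambda>_. 1))"
  shows "distributable (components V E F') (assoc_edges V E F') (assoc_cap (\<lambda>_. 1))"
proof -
  have restore: "distributable (components V E (F - D)) (assoc_edges V E (F - D)) (assoc_cap (\<lambda>_. 1))"
    if "finite D" "D \<subseteq> F" for D
    using that
  proof (induction D rule: finite_induct)
    case empty
    then show ?case using assms(3) by simp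
  next
    case (insert e D)
    have "F - D \<subseteq> E" "e \<in> F - D" using insert.prems insert.hyps(2) assms(2) by blast+
    moreover have "F - insert e D = F - D - {e}" by blast
    ultimately show ?case using distributable_Diff_edge insert.IH insert.prems by simp
  qed
  have "finite (F - F')" using assms(2) finite_edges finite_subset by blast
  from restore[OF this] have "distributable (components V E (F - (F - F')))
      (assoc_edges V E (F - (F - F'))) (assoc_cap (\<lambda>_. 1))" by blast
  moreover have "F - (F - F') = F'" using assms(1) by blast
  ultimately show ?thesis by simp
qed

lemma deg_merged_edge_le_cap:
  assumes dist: "distributable V E cap" and e: "{c1, c2} \<in> E"
  shows "deg (assoc_edges V E (E - {{c1, c2}})) {c1, c2} \<le> assoc_cap cap {c1, c2}"
proof -
  let ?c = "comp V E (E - {{c1, c2}})" and ?X = "E - {{c1, c2}}"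
  have c12: "c1 \<noteq> c2" "c1 \<in> V" "c2 \<in> V"
    using e edge_pair by (auto simp: doubleton_eq_iff)
  have "assoc_edges V E ?X \<subseteq> (\<lambda>x. ?c ` x) ` ?X"
    using assoc_edges_eq_image[of ?X] by blast
  then have "deg (assoc_edges V E ?X) {c1, c2} \<le> card {x \<in> ?X. \<exists>w\<in>x. ?c w = {c1, c2}}"
    unfolding deg_def using finite_edges by (intro card_edges_containing_le_fibre) auto
  also have "\<dots> \<le> card {x \<in> ?X. c1 \<in> x \<or> c2 \<in> x}"
    using finite_edges edge_subset_vertices comp_self by (intro card_mono) fastforce+
  also have "card {x \<in> ?X. c1 \<in> x \<or> c2 \<in> x} + 1 = card {x \<in> E. c1 \<in> x \<or> c2 \<in> x}"
  proof -
    have "{x \<in> ?X. c1 \<in> x \<or> c2 \<in> x} = {x \<in> E. c1 \<in> x \<or> c2 \<in> x} - {{c1, c2}}" by blast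
    moreover have "finite {x \<in> E. c1 \<in> x \<or> c2 \<in> x}" using finite_edges by simp
    ultimately show ?thesis using e card.remove[of _ "{c1, c2}"] by simp
  qed
  ultimately have "deg (assoc_edges V E ?X) {c1, c2} + 2 \<le> deg E c1 + deg E c2"
    using card_edges_meeting_edge[OF finite_edges e] by linarith
  moreover have "int (deg E c1) - 1 \<le> int (cap c1)" "int (deg E c2) - 1 \<le> int (cap c2)"
    using dist c12 unfolding distributable_def by auto
  ultimately show ?thesis
    using c12(1) unfolding assoc_cap_def by simp
qed

end

lemma finite_simple_graph_if_tree:
  assumes "is_tree V E" shows "finite_simple_graph V E"
proof
  show "finite V" using assms by (simp add: is_tree_def)
  show "\<forall>e\<in>E. \<exists>u v. e = {u, v} \<and> u \<in> V \<and> v \<in> V \<and> u \<noteq> v"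
    using assms unfolding is_tree_def by (elim conjE)
qed

theorem mainTheorem6:
  shows "(\<forall>(n::nat) E. is_tree {1..n} E \<longrightarrow>
            (\<forall>\<sigma> \<tau>. is_face n E \<tau> \<and> is_face n E \<sigma> \<and> face_le n E \<sigma> \<tau> \<and> face_distributable n E \<tau>
                \<longrightarrow> face_distributable n E \<sigma>))
       \<and> (\<forall>(V::'a set) E (cap::'a \<Rightarrow> nat) c1 c2.
            is_tree V E \<and> distributable V E cap \<and> {c1, c2} \<in> E
            \<longrightarrow> deg (assoc_edges V E (E - {{c1, c2}})) {c1, c2} \<le> assoc_cap cap {c1, c2})"
proof (intro conjI allI impI)
  fix n :: nat and E \<sigma> \<tau>
  assume tree: "is_tree {1..n} E"
    and faces: "is_face n E \<tau> \<and> is_face n E \<sigma> \<and> face_le n E \<sigma> \<tau> \<and> face_distributable n E \<tau>"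
  interpret finite_simple_graph "{1..n}" E using tree by (rule finite_simple_graph_if_tree)
  obtain F lab F' lab' where \<tau>: "\<tau> = (F, lab)" and \<sigma>: "\<sigma> = (F', lab')"
    by (cases \<tau>, cases \<sigma>)
  have "F' \<subseteq> F" and "F \<subseteq> E" and
    "distributable (components {1..n} E F) (assoc_edges {1..n} E F) (assoc_cap (\<lambda>_. 1))"
    using faces unfolding \<tau> \<sigma> is_face_def face_le_def face_distributable_def by simp_all
  then show "face_distributable n E \<sigma>"
    unfolding \<sigma> face_distributable_def fst_conv by (rule distributable_antimono)
next
  fix V :: "'a set" and E cap c1 c2
  assume "is_tree V E \<and> distributable V E cap \<and> {c1, c2} \<in> E"
  then show "deg (assoc_edges V E (E - {{c1, c2}})) {c1, c2} \<le> assoc_cap cap {c1, c2}"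
    by (elim conjE) (rule finite_simple_graph.deg_merged_edge_le_cap[OF finite_simple_graph_if_tree])
qed

end
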